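(* Let $k\ge 1$ and let $P_{4k+1}$ be the path with vertices labeled $1,2,\dots,4k+1$ consecutively. Then $\tau(P_{4k+1})=k$, and for each vertex $v$, writing $v=4q+r$ with $0\le r<4$, $$TDV(v)=\begin{cases}q & \text{if } v\equiv 0 \pmod 4,\\ 0 & \text{if } v\equiv 1 \pmod 4,\\ k-q & \text{if } v\equiv 2 \pmod 4,\\ k & \text{if } v\equiv 3 \pmod 4.\end{cases}$$
   Context: A set $D \subseteq V(G)$ is a total dominating set of a graph $G$ if every vertex of $G$ has a neighbor in $D$. $\gamma_t(G)$ is the minimum cardinality of a total dominating set; a minimum one is a $\gamma_t(G)$-set. $\tau(G)$ is the number of $\gamma_t(G)$-sets and $TDV(v)$ is the number of $\gamma_t(P_{4k+1})$-sets containing $v$. *)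

theory Defs
  imports Main
begin

definition is_tds :: "'a set \<Rightarrow> ('a \<Rightarrow> 'a \<Rightarrow> bool) \<Rightarrow> 'a set \<Rightarrow> bool" where
  "is_tds V adj D \<longleftrightarrow> D \<subseteq> V \<and> (\<forall>v\<in>V. \<exists>u\<in>D. adj v u)"

definition gamma_t :: "'a set \<Rightarrow> ('a \<Rightarrow> 'a \<Rightarrow> bool) \<Rightarrow> nat" where
  "gamma_t V adj = (LEAST m. \<exists>D. is_tds V adj D \<and> card D = m)"

definition gamma_t_sets :: "'a set \<Rightarrow> ('a \<Rightarrow> 'a \<Rightarrow> bool) \<Rightarrow> 'a set set" where
  "gamma_t_sets V adj = {D. is_tds V adj D \<and> card D = gamma_t V adj}"

definition tau :: "'a set \<Rightarrow> ('a \<Rightarrow> 'a \<Rightarrow> bool) \<Rightarrow> nat" where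
  "tau V adj = card (gamma_t_sets V adj)"

definition TDV :: "'a set \<Rightarrow> ('a \<Rightarrow> 'a \<Rightarrow> bool) \<Rightarrow> 'a \<Rightarrow> nat" where
  "TDV V adj v = card {D \<in> gamma_t_sets V adj. v \<in> D}"

definition path_V :: "nat \<Rightarrow> nat set" where
  "path_V n = {1..n}"

definition path_adj :: "nat \<Rightarrow> nat \<Rightarrow> nat \<Rightarrow> bool" where
  "path_adj n u v \<longleftrightarrow> u \<in> {1..n} \<and> v \<in> {1..n} \<and> (v = u + 1 \<or> u = v + 1)"

end

theory Submission
  imports Defs
begin

text \<open>Cut the vertices into the blocks \<open>{4i, ..., 4i+3}\<close> for \<open>i < k\<close> and the final block
  \<open>{4k, 4k+1}\<close>. Dominating \<open>4i+1\<close> and \<open>4i+2\<close> forces two vertices of a total dominating set \<open>D\<close>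
  into every full block, and dominating \<open>4k+1\<close> forces \<open>4k \<in> D\<close>; hence \<open>|D| \<ge> 2k+1\<close>.
  If equality holds, every block is tight, and propagating domination along the path shows
  that \<open>D\<close> contains all \<open>4i+3\<close>, no \<open>4i+1\<close>, the vertices \<open>4i\<close> exactly for \<open>i\<close> from some
  threshold \<open>j \<ge> 1\<close> on, and \<open>4i+2\<close> exactly for \<open>i < j\<close>. So the \<open>\<gamma>\<^sub>t\<close>-sets are these \<open>k\<close> sets,
  and \<open>TDV(v)\<close> counts the thresholds \<open>j\<close> whose set contains \<open>v\<close>.\<close>

lemma is_tds_path_iff:
  "is_tds (path_V n) (path_adj n) D \<longleftrightarrow>
     D \<subseteq> {1..n} \<and> (\<forall>v\<in>{1..n}. v - 1 \<in> D \<or> v + 1 \<in> D)"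
proof -
  have "(\<exists>u\<in>D. path_adj n v u) \<longleftrightarrow> v - 1 \<in> D \<or> v + 1 \<in> D"
    if "D \<subseteq> {1..n}" "v \<in> {1..n}" for v
  proof
    assume "\<exists>u\<in>D. path_adj n v u"
    then show "v - 1 \<in> D \<or> v + 1 \<in> D"
      unfolding path_adj_def by (metis diff_add_inverse2)
  next
    assume "v - 1 \<in> D \<or> v + 1 \<in> D"
    then show "\<exists>u\<in>D. path_adj n v u"
      using that unfolding path_adj_def by (metis atLeastAtMost_iff le_add_diff_inverse2 subsetD)
  qed
  then show ?thesis
    unfolding is_tds_def path_V_def by blast
qed

text \<open>The simplifier rewrites \<open>n + 1\<close> and \<open>n + 2\<close> to \<open>Suc\<close>-terms; extending this to \<open>n + 3\<close>
  keeps vertex names like \<open>4*i+3\<close> in one normal form.\<close>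

lemma add_3_eq_Suc' [simp]: "n + 3 = Suc (Suc (Suc n))"
  by simp

lemma mod4_cases:
  fixes x :: nat
  obtains (0) q where "x = 4*q" | (1) q where "x = 4*q+1"
    | (2) q where "x = 4*q+2" | (3) q where "x = 4*q+3"
proof -
  have x: "x = 4 * (x div 4) + x mod 4"
    by simp
  have "x mod 4 = 0 \<or> x mod 4 = 1 \<or> x mod 4 = 2 \<or> x mod 4 = 3"
    by arith
  then show thesis
    using that x by (metis add.right_neutral)
qed

definition min_tds :: "nat \<Rightarrow> nat \<Rightarrow> nat set" where
  "min_tds k j = (\<lambda>q. 4*q) ` {j..k} \<union> (\<lambda>q. 4*q+2) ` {..<j} \<union> (\<lambda>q. 4*q+3) ` {..<k}"

lemma mem_min_tds:
  "4*q \<in> min_tds k j \<longleftrightarrow> j \<le> q \<and> q \<le> k"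
  "4*q+1 \<notin> min_tds k j"
  "4*q+2 \<in> min_tds k j \<longleftrightarrow> q < j"
  "4*q+3 \<in> min_tds k j \<longleftrightarrow> q < k"
  unfolding min_tds_def by (auto; presburger)+

declare mem_min_tds[simplified, simp] \<comment> \<open>stored in the \<open>Suc\<close>-normal form of the vertex names\<close>

lemma card_min_tds: "j \<le> k \<Longrightarrow> card (min_tds k j) = 2*k+1"
proof -
  assume "j \<le> k"
  have "card (min_tds k j) = card ((\<lambda>q. 4*q) ` {j..k}) + card ((\<lambda>q. 4*q+2) ` {..<j})
      + card ((\<lambda>q. 4*q+3) ` {..<k})"
    unfolding min_tds_def
    by (subst card_Un_disjoint; (subst card_Un_disjoint)?; auto; presburger)
  also have "\<dots> = (k + 1 - j) + j + k"
    by (simp add: card_image inj_on_def)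
  finally show ?thesis
    using \<open>j \<le> k\<close> by simp
qed

lemma inj_min_tds: "inj (min_tds k)"
proof (rule injI)
  fix a b assume "min_tds k a = min_tds k b"
  then have "4*q+2 \<in> min_tds k a \<longleftrightarrow> 4*q+2 \<in> min_tds k b" for q
    by simp
  then show "a = b"
    by (metis mem_min_tds(3) linorder_neqE_nat less_irrefl)
qed

lemma min_tds_is_tds:
  assumes "1 \<le> j" "j \<le> k"
  shows "is_tds (path_V (4*k+1)) (path_adj (4*k+1)) (min_tds k j)"
  unfolding is_tds_path_iff
proof (intro conjI subsetI ballI)
  fix x assume "x \<in> min_tds k j"
  then show "x \<in> {1..4*k+1}"
    using assms by (cases x rule: mod4_cases) auto
next
  fix v assume v: "v \<in> {1..4*k+1}"
  show "v - 1 \<in> min_tds k j \<or> v + 1 \<in> min_tds k j"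
  proof (cases v rule: mod4_cases)
    case (0 q)
    with v have "v - 1 = 4*(q-1)+3" "q - 1 < k"
      by auto
    then show ?thesis
      by simp
  next
    case (1 q)
    with v show ?thesis
      by auto
  next
    case (2 q)
    with v show ?thesis
      by auto
  next
    case (3 q)
    with v have "v + 1 = 4*(q+1)" "q < k"
      by auto
    then show ?thesis
      using \<open>v = 4*q+3\<close> unfolding \<open>v + 1 = 4*(q+1)\<close> mem_min_tds(1) by auto
  qed
qed

definition block :: "nat set \<Rightarrow> nat \<Rightarrow> nat set" where
  "block D i = D \<inter> {4*i..<4*i+4}"

lemma sum_block_bounds: "(\<Sum>i\<le>k. if i < k then 2 else 1 :: nat) = 2*k+1"
proof -
  have "(\<Sum>i\<le>k. if i < k then 2 else 1 :: nat) = (\<Sum>i<k. 2) + 1"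
    by (simp add: lessThan_Suc_atMost[symmetric])
  then show ?thesis by simp
qed

context
  fixes k :: nat and D :: "nat set"
  assumes tds: "is_tds (path_V (4*k+1)) (path_adj (4*k+1)) D"
begin

lemma tds_subset: "D \<subseteq> {1..4*k+1}"
  using tds by (simp add: is_tds_path_iff)

lemma tds_neighbour:
  assumes "v < 4*k+1"
  shows "v \<in> D \<or> v + 2 \<in> D"
proof -
  have "v + 1 \<in> {1..4*k+1}"
    using assms by simp
  with tds show ?thesis
    unfolding is_tds_path_iff by fastforce
qed

lemma tds_4i_or_4i2: "i < k \<Longrightarrow> 4*i \<in> D \<or> 4*i+2 \<in> D"
  using tds_neighbour[of "4*i"] by simp

lemma tds_4i1_or_4i3: "i < k \<Longrightarrow> 4*i+1 \<in> D \<or> 4*i+3 \<in> D"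
  using tds_neighbour[of "4*i+1"] by simp

lemma tds_4k_mem: "4*k \<in> D"
  using tds_neighbour[of "4*k"] tds_subset by auto

lemma card_eq_sum_blocks: "card D = (\<Sum>i\<le>k. card (block D i))"
proof -
  have "D \<subseteq> (\<Union>i\<le>k. block D i)"
  proof
    fix x assume "x \<in> D"
    then have "x \<le> 4*k+1"
      using tds_subset by auto
    then have "x div 4 \<in> {..k}"
      by simp
    moreover have "x \<in> {4*(x div 4)..<4*(x div 4)+4}"
      by simp
    ultimately show "x \<in> (\<Union>i\<le>k. block D i)"
      using \<open>x \<in> D\<close> unfolding block_def by blast
  qed
  then have "D = (\<Union>i\<le>k. block D i)"
    unfolding block_def by blast
  moreover have "block D i \<inter> block D j = {}" if "i \<noteq> j" for i j
    using that unfolding block_def by auto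
  ultimately show ?thesis
    using card_UN_disjoint[of "{..k}" "block D"] by (simp add: block_def)
qed

lemma card_block_ge: "i \<le> k \<Longrightarrow> (if i < k then 2 else 1) \<le> card (block D i)"
proof -
  assume "i \<le> k"
  have "finite (block D i)"
    by (simp add: block_def)
  show ?thesis
  proof (cases "i < k")
    case True
    then obtain x y where "x \<in> {4*i, 4*i+2}" "y \<in> {4*i+1, 4*i+3}" "x \<in> D" "y \<in> D"
      using tds_4i_or_4i2 tds_4i1_or_4i3 by blast
    then have "{x, y} \<subseteq> block D i" "x \<noteq> y"
      by (auto simp: block_def)
    then have "2 \<le> card (block D i)"
      using card_mono[OF \<open>finite (block D i)\<close>, of "{x, y}"] by simp
    with True show ?thesis by simp
  next
    case False
    with \<open>i \<le> k\<close> have "4*k \<in> block D i"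
      using tds_4k_mem by (simp add: block_def)
    then have "1 \<le> card (block D i)"
      using \<open>finite (block D i)\<close> by (auto simp: Suc_le_eq card_gt_0_iff)
    with False show ?thesis by simp
  qed
qed

lemma card_tds_ge: "2*k+1 \<le> card D"
proof -
  have "(\<Sum>i\<le>k. if i < k then 2 else 1) \<le> (\<Sum>i\<le>k. card (block D i))"
    by (rule sum_mono) (simp add: card_block_ge)
  then show ?thesis
    by (simp only: card_eq_sum_blocks sum_block_bounds)
qed

context
  assumes tight: "card D = 2*k+1"
begin

lemma tight_card_block:
  assumes "i \<le> k"
  shows "card (block D i) = (if i < k then 2 else 1)"
proof (rule ccontr)
  assume "card (block D i) \<noteq> (if i < k then 2 else 1)"
  with card_block_ge[OF assms] have less: "(if i < k then 2 else 1) < card (block D i)"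
    by linarith
  have "\<forall>j\<in>{..k}. (if j < k then 2 else 1) \<le> card (block D j)"
    using card_block_ge by simp
  moreover have "\<exists>j\<in>{..k}. (if j < k then 2 else 1) < card (block D j)"
    using less assms by blast
  ultimately have "(\<Sum>j\<le>k. if j < k then 2 else 1) < (\<Sum>j\<le>k. card (block D j))"
    by (rule sum_strict_mono_ex1[OF finite_atMost])
  then show False
    using tight by (simp only: card_eq_sum_blocks sum_block_bounds)
qed

lemma tight_block_no_three:
  assumes "i < k" "{x, y, z} \<subseteq> block D i"
  shows "x = y \<or> x = z \<or> y = z"
proof -
  have "card {x, y, z} \<le> 2"
    using card_mono[of "block D i"] assms tight_card_block[of i] by (simp add: block_def)
  then show ?thesis
    by (auto simp: card_insert_if split: if_splits)
qed

lemma tight_not_4i_and_4i2: "i < k \<Longrightarrow> 4*i \<notin> D \<or> 4*i+2 \<notin> D"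
proof (rule ccontr)
  assume "i < k" and both: "\<not> (4*i \<notin> D \<or> 4*i+2 \<notin> D)"
  obtain y where y: "y \<in> {4*i+1, 4*i+3}" "y \<in> D"
    using tds_4i1_or_4i3 \<open>i < k\<close> by blast
  with both have "{4*i, 4*i+2, y} \<subseteq> block D i"
    by (auto simp: block_def)
  from tight_block_no_three[OF \<open>i < k\<close> this] y show False
    by auto
qed

lemma tight_not_4i1_and_4i3: "i < k \<Longrightarrow> 4*i+1 \<notin> D \<or> 4*i+3 \<notin> D"
proof (rule ccontr)
  assume "i < k" and both: "\<not> (4*i+1 \<notin> D \<or> 4*i+3 \<notin> D)"
  obtain y where y: "y \<in> {4*i, 4*i+2}" "y \<in> D"
    using tds_4i_or_4i2 \<open>i < k\<close> by blast
  with both have "{4*i+1, 4*i+3, y} \<subseteq> block D i"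
    by (auto simp: block_def)
  from tight_block_no_three[OF \<open>i < k\<close> this] y show False
    by auto
qed

lemma tight_4k1_notin: "4*k+1 \<notin> D"
proof
  assume "4*k+1 \<in> D"
  then have "{4*k, 4*k+1} \<subseteq> block D k"
    using tds_4k_mem by (simp add: block_def)
  moreover have "finite (block D k)"
    by (simp add: block_def)
  ultimately have "2 \<le> card (block D k)"
    using card_mono[of "block D k" "{4*k, 4*k+1}"] by simp
  then show False
    using tight_card_block[of k] by simp
qed

text \<open>Downward induction: \<open>4k\<close> is dominated by \<open>4k-1\<close> since \<open>4k+1 \<notin> D\<close>, and
  \<open>4(n+1)+3 \<in> D\<close> excludes \<open>4(n+1)+1\<close>, so \<open>4n+4\<close> must be dominated by \<open>4n+3\<close>.\<close>

lemma tight_4i3_mem: "i < k \<Longrightarrow> 4*i+3 \<in> D"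
proof -
  assume "i < k"
  then have "i \<le> k - 1" by simp
  then show ?thesis
  proof (induction rule: inc_induct)
    case base
    have "4*(k-1)+3 = 4*k-1"
      using \<open>i < k\<close> by simp
    then show ?case
      using tds_neighbour[of "4*k-1"] tight_4k1_notin \<open>i < k\<close> by simp
  next
    case (step n)
    then have "4*(Suc n)+1 \<notin> D"
      using tight_not_4i1_and_4i3[of "Suc n"] by simp
    moreover have "4*n+3+2 = 4*(Suc n)+1" "4*n+3 < 4*k+1"
      using step.hyps by simp_all
    ultimately show ?case
      using tds_neighbour[of "4*n+3"] by metis
  qed
qed

lemma tight_4i1_notin: "i \<le> k \<Longrightarrow> 4*i+1 \<notin> D"
  using tight_4k1_notin tight_4i3_mem tight_not_4i1_and_4i3 by (cases "i = k") auto

lemma tight_4i_Suc_mem: "i < k \<Longrightarrow> 4*i \<in> D \<Longrightarrow> 4*(i+1) \<in> D"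
proof -
  assume "i < k" "4*i \<in> D"
  moreover have "4*i+2+2 = 4*(i+1)" "4*i+2 < 4*k+1"
    using \<open>i < k\<close> by simp_all
  ultimately show ?thesis
    using tds_neighbour[of "4*i+2"] tight_not_4i_and_4i2[of i] by metis
qed

lemma tight_eq_min_tds: "\<exists>j\<in>{1..k}. D = min_tds k j"
proof -
  define j where "j = (LEAST i. 4*i \<in> D)"
  have "4*j \<in> D" "j \<le> k"
    unfolding j_def using tds_4k_mem by (auto intro: LeastI Least_le)
  have "j \<noteq> 0"
    using \<open>4*j \<in> D\<close> tds_subset by auto
  have in0: "4*q \<in> D \<longleftrightarrow> j \<le> q \<and> q \<le> k" for q
  proof
    assume "4*q \<in> D"
    then show "j \<le> q \<and> q \<le> k"
      using tds_subset Least_le[of "\<lambda>i. 4*i \<in> D" q] unfolding j_def by auto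
  next
    assume "j \<le> q \<and> q \<le> k"
    then have "j \<le> q" "q \<le> k" by simp_all
    from \<open>j \<le> q\<close> show "4*q \<in> D"
    proof (induction q rule: dec_induct)
      case base
      show ?case by (fact \<open>4*j \<in> D\<close>)
    next
      case (step n)
      with \<open>q \<le> k\<close> show ?case
        using tight_4i_Suc_mem[of n] by simp
    qed
  qed
  have in1: "4*q+1 \<notin> D" for q
    using tight_4i1_notin[of q] tds_subset by (cases "q \<le> k") auto
  have in2: "4*q+2 \<in> D \<longleftrightarrow> q < j" for q
  proof
    assume "4*q+2 \<in> D"
    then have "q < k"
      using tds_subset by auto
    with \<open>4*q+2 \<in> D\<close> show "q < j"
      using in0[of q] tight_not_4i_and_4i2[of q] by auto
  next
    assume "q < j"
    then show "4*q+2 \<in> D"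
      using in0[of q] tds_4i_or_4i2[of q] \<open>j \<le> k\<close> by auto
  qed
  have in3: "4*q+3 \<in> D \<longleftrightarrow> q < k" for q
    using tight_4i3_mem[of q] tds_subset by auto
  have "D = min_tds k j"
  proof (rule set_eqI)
    fix x
    show "x \<in> D \<longleftrightarrow> x \<in> min_tds k j"
      by (cases x rule: mod4_cases) (simp_all only: in0 in1 in2 in3 mem_min_tds simp_thms)
  qed
  with \<open>j \<noteq> 0\<close> \<open>j \<le> k\<close> show ?thesis
    by auto
qed

end
end

lemma gamma_t_path:
  assumes "1 \<le> k"
  shows "gamma_t (path_V (4*k+1)) (path_adj (4*k+1)) = 2*k+1"
  unfolding gamma_t_def
proof (rule Least_equality)
  show "\<exists>D. is_tds (path_V (4*k+1)) (path_adj (4*k+1)) D \<and> card D = 2*k+1"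
    using min_tds_is_tds[of 1 k] card_min_tds[of 1 k] assms by blast
qed (use card_tds_ge in blast)

lemma gamma_t_sets_path:
  assumes "1 \<le> k"
  shows "gamma_t_sets (path_V (4*k+1)) (path_adj (4*k+1)) = min_tds k ` {1..k}"
  unfolding gamma_t_sets_def gamma_t_path[OF assms]
  using tight_eq_min_tds min_tds_is_tds card_min_tds by fastforce

lemma TDV_path:
  assumes "1 \<le> k"
  shows "TDV (path_V (4*k+1)) (path_adj (4*k+1)) v = card {j\<in>{1..k}. v \<in> min_tds k j}"
proof -
  have "{D \<in> min_tds k ` {1..k}. v \<in> D} = min_tds k ` {j\<in>{1..k}. v \<in> min_tds k j}"
    by blast
  then show ?thesis
    unfolding TDV_def gamma_t_sets_path[OF assms]
    using card_image[OF inj_on_subset[OF inj_min_tds]] by simp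
qed

lemma card_min_tds_containing:
  assumes "v \<le> 4*k+1"
  shows "card {j\<in>{1..k}. v \<in> min_tds k j} =
    (if v mod 4 = 0 then v div 4
     else if v mod 4 = 1 then 0
     else if v mod 4 = 2 then k - v div 4
     else k)"
proof (cases v rule: mod4_cases)
  case (0 q)
  with assms have "{j\<in>{1..k}. v \<in> min_tds k j} = {1..q}"
    by auto
  with 0 show ?thesis
    by simp
next
  case (1 q)
  then have "{j\<in>{1..k}. v \<in> min_tds k j} = {}" "v mod 4 = 1"
    by simp_all
  then show ?thesis
    by simp
next
  case (2 q)
  with assms have "{j\<in>{1..k}. v \<in> min_tds k j} = {q+1..k}" "v mod 4 = 2" "v div 4 = q"
    by auto presburger+
  then show ?thesis
    by simp
next
  case (3 q)
  with assms have "{j\<in>{1..k}. v \<in> min_tds k j} = {1..k}" "v mod 4 = 3"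
    by auto
  then show ?thesis
    by simp
qed

theorem proposition5p3:
  fixes k :: nat
  assumes "k \<ge> 1"
  shows "tau (path_V (4*k+1)) (path_adj (4*k+1)) = k \<and>
    (\<forall>v \<in> path_V (4*k+1).
       TDV (path_V (4*k+1)) (path_adj (4*k+1)) v =
         (if v mod 4 = 0 then v div 4
          else if v mod 4 = 1 then 0
          else if v mod 4 = 2 then k - v div 4
          else k))"
proof
  show "tau (path_V (4*k+1)) (path_adj (4*k+1)) = k"
    unfolding tau_def gamma_t_sets_path[OF assms]
    using card_image[OF inj_on_subset[OF inj_min_tds]] by simp
  show "\<forall>v \<in> path_V (4*k+1). TDV (path_V (4*k+1)) (path_adj (4*k+1)) v =
      (if v mod 4 = 0 then v div 4 else if v mod 4 = 1 then 0
       else if v mod 4 = 2 then k - v div 4 else k)"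
    using TDV_path[OF assms] card_min_tds_containing by (simp add: path_V_def)
qed

end
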